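(* Let $\mathcal{G}^s$ be an SCG, consider the effect $P(y_t\mid \text{do}(x^1_{t-\gamma_1}),\dots,\text{do}(x^n_{t-\gamma_n}))$, let $F\in\mathcal{V}^s$ and fix an intervention $X^i_{t-\gamma_i}$. The following are equivalent: 1. There exists $t_f\in\mathbb{Z}$ such that $F_{t_f}$ is both $X^i_{t-\gamma_i}$-$\mathcal{NC}$-accessible and $Y_t$-$\mathcal{NC}$-accessible. 2. $t_{\mathcal{NC}}(F)\le t^{\mathcal{NC}}_{X^i_{t-\gamma_i}}(F)$ and $t_{\mathcal{NC}}(F)\le t^{\mathcal{NC}}_{Y_t}(F)$.
   Context: Let $\mathcal{V}$ be a finite set of time series, $\mathcal{V}^f=\{X_s: X\in\mathcal{V},s\in\mathbb{Z}\}$. An FTCG is a DAG on $\mathcal{V}^f$ whose edges $X_s\to Z_{s'}$ satisfy $s\le s'$. The SCG reduced from an FTCG $\mathcal{G}^f$ is $\mathcal{G}^s=(\mathcal{V}^s,\mathcal{E}^s)$, $\mathcal{V}^s=\mathcal{V}$, with $X\to Z$ iff $\mathcal{G}^f$ has an edge $X_{s-\gamma}\to Z_s$ with $\gamma\ge0$. An SCG is a graph reduced from some FTCG; $\mathcal{C}(\mathcal{G}^s)$ is the class of candidate FTCGs (those from which $\mathcal{G}^s$ is reduced). Descendants are via directed paths (a vertex is its own descendant). A path from set $\mathbf{A}$ to $\mathbf{B}$ is proper if only its first vertex is in $\mathbf{A}$. $\text{Forb}(\mathbf{X},\mathbf{Y},\mathcal{G})$: all descendants of any $W\notin\mathbf{X}$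 on a proper directed path from $\mathbf{X}$ to $\mathbf{Y}$. Effect setup: fix $Y\in\mathcal{V}^s$, time $t$, interventions $X^1_{t-\gamma_1},\dots,X^n_{t-\gamma_n}$ (distinct vertices of $\mathcal{V}^f$) with $\gamma_i\ge0$ and $Y$ a descendant of every $X^i$ in $\mathcal{G}^s$. $\mathcal{X}^f=\{X^i_{t-\gamma_i}\}_i$. $\mathcal{CF}=\bigcup_{\mathcal{G}^f\in\mathcal{C}(\mathcal{G}^s)}\text{Forb}(\mathcal{X}^f,Y_t,\mathcal{G}^f)$, $\mathcal{NC}=\mathcal{CF}\setminus\mathcal{X}^f$, $t_{\mathcal{NC}}(F)=\min\{t_1:F_{t_1}\in\mathcal{NC}\}$ ($\min\emptyset=+\infty$). For $V_{t_v}\in\mathcal{V}^f$, $F_{t_1}\in\mathcal{V}^f\setminus\{V_{t_v}\}$ is $V_{t_v}$-$\mathcal{NC}$-accessible if some candidate FTCG contains a directed path from $F_{t_1}$ to $V_{t_v}$ all of whose vertices except possibly $V_{t_v}$ lie in $\mathcal{NC}$; $t^{\mathcal{NC}}_{V_{t_v}}(F)=\max\{t_1: F_{t_1}\text{ is }V_{t_v}\text{-}\mathcal{NC}\text{-accessible}\}$ ($\max\emptyset=-\infty$). *)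

theory Defs
  imports Main "HOL-Library.Extended_Real"
begin

type_synonym 'v tvertex = "'v \<times> int"   (* X_s  is  (X, s) *)

definition full_vertices :: "'v set \<Rightarrow> 'v tvertex set" where
  "full_vertices V = V \<times> (UNIV :: int set)"

definition is_FTCG :: "'v set \<Rightarrow> ('v tvertex \<times> 'v tvertex) set \<Rightarrow> bool" where
  "is_FTCG V E \<longleftrightarrow> E \<subseteq> full_vertices V \<times> full_vertices V
     \<and> (\<forall>X s Z s'. ((X, s), (Z, s')) \<in> E \<longrightarrow> s \<le> s')
     \<and> acyclic E"

definition reduce :: "('v tvertex \<times> 'v tvertex) set \<Rightarrow> ('v \<times> 'v) set" where
  "reduce E = {(X, Z). \<exists>s \<gamma>. \<gamma> \<ge> 0 \<and> ((X, s - \<gamma>), (Z, s)) \<in> E}"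

definition is_SCG :: "'v set \<Rightarrow> ('v \<times> 'v) set \<Rightarrow> bool" where
  "is_SCG V Es \<longleftrightarrow> (\<exists>E. is_FTCG V E \<and> reduce E = Es)"

definition candidates :: "'v set \<Rightarrow> ('v \<times> 'v) set \<Rightarrow> ('v tvertex \<times> 'v tvertex) set set" where
  "candidates V Es = {E. is_FTCG V E \<and> reduce E = Es}"

definition dpath :: "('a \<times> 'a) set \<Rightarrow> 'a list \<Rightarrow> bool" where
  "dpath E p \<longleftrightarrow> p \<noteq> [] \<and> (\<forall>j. Suc j < length p \<longrightarrow> (p ! j, p ! Suc j) \<in> E)"

definition proper_dpath :: "('a \<times> 'a) set \<Rightarrow> 'a set \<Rightarrow> 'a set \<Rightarrow> 'a list \<Rightarrow> bool" where
  "proper_dpath E A B p \<longleftrightarrow> dpath E p \<and> hd p \<in> A \<and> last p \<in> B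
     \<and> (\<forall>v \<in> set (tl p). v \<notin> A)"

(* descendants via directed paths; each vertex is its own descendant *)
definition descendants :: "('a \<times> 'a) set \<Rightarrow> 'a \<Rightarrow> 'a set" where
  "descendants E W = {D. \<exists>p. dpath E p \<and> hd p = W \<and> last p = D}"

definition Forb :: "'a set \<Rightarrow> 'a set \<Rightarrow> ('a \<times> 'a) set \<Rightarrow> 'a set" where
  "Forb A B E = {D. \<exists>p W. proper_dpath E A B p \<and> W \<in> set p \<and> W \<notin> A
                      \<and> D \<in> descendants E W}"

definition CF :: "'v set \<Rightarrow> ('v \<times> 'v) set \<Rightarrow> 'v tvertex set \<Rightarrow> 'v \<Rightarrow> int \<Rightarrow> 'v tvertex set" where
  "CF V Es Xf Y t = (\<Union>E \<in> candidates V Es. Forb Xf {(Y, t)} E)"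

definition NC :: "'v set \<Rightarrow> ('v \<times> 'v) set \<Rightarrow> 'v tvertex set \<Rightarrow> 'v \<Rightarrow> int \<Rightarrow> 'v tvertex set" where
  "NC V Es Xf Y t = CF V Es Xf Y t - Xf"

(* t_NC(F) = min {t1. F_t1 in NC}, min {} = +infinity *)
definition t_NC :: "'v set \<Rightarrow> ('v \<times> 'v) set \<Rightarrow> 'v tvertex set \<Rightarrow> 'v \<Rightarrow> int \<Rightarrow> 'v \<Rightarrow> ereal" where
  "t_NC V Es Xf Y t F = Inf {ereal (real_of_int t1) | t1. (F, t1) \<in> NC V Es Xf Y t}"

definition NC_accessible :: "'v set \<Rightarrow> ('v \<times> 'v) set \<Rightarrow> 'v tvertex set \<Rightarrow> 'v \<Rightarrow> int
     \<Rightarrow> 'v tvertex \<Rightarrow> 'v tvertex \<Rightarrow> bool" where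
  "NC_accessible V Es Xf Y t Vt Ft \<longleftrightarrow> Ft \<in> full_vertices V - {Vt}
     \<and> (\<exists>E \<in> candidates V Es. \<exists>p. dpath E p \<and> hd p = Ft \<and> last p = Vt
           \<and> (\<forall>v \<in> set (butlast p). v \<in> NC V Es Xf Y t))"

(* t^NC_Vt(F) = max {t1. F_t1 accessible}, max {} = -infinity *)
definition t_acc :: "'v set \<Rightarrow> ('v \<times> 'v) set \<Rightarrow> 'v tvertex set \<Rightarrow> 'v \<Rightarrow> int
     \<Rightarrow> 'v tvertex \<Rightarrow> 'v \<Rightarrow> ereal" where
  "t_acc V Es Xf Y t Vt F = Sup {ereal (real_of_int t1) | t1. NC_accessible V Es Xf Y t Vt (F, t1)}"

end

theory Submission
  imports Defs
begin

(* Every NC vertex lies at or after some intervention time, so the NC times of F are bounded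
   below, while the times at which F is T-NC-accessible are bounded above by the time of T.
   Hence t_NC(F) <= t^NC_T(F) just says that F is T-NC-accessible at some time.
   Accessibility can moreover be moved to any earlier NC copy of F: adding to a candidate FTCG
   every edge X_s -> Z_s' with X -> Z in the SCG and s < s' yields again a candidate, in which
   a path leaving F_a may leave F_m (m < a) instead. So the earliest NC copy of F is accessible
   towards both X^i and Y_t. *)

lemma int_set_bdd_below_has_least:
  fixes S :: "int set"
  assumes "a \<in> S" "\<forall>s\<in>S. L \<le> s"
  obtains m where "m \<in> S" "\<forall>s\<in>S. m \<le> s"
proof
  let ?M = "Min (S \<inter> {L..a})"
  have fin: "finite (S \<inter> {L..a})" and a: "a \<in> S \<inter> {L..a}" using assms by auto
  show "?M \<in> S" using Min_in[OF fin] a by blast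
  show "\<forall>s\<in>S. ?M \<le> s"
  proof
    fix s assume "s \<in> S"
    then show "?M \<le> s"
      using Min_le[OF fin] Min_le[OF fin a] assms(2) by (cases "s \<le> a") auto
  qed
qed

lemma dpath_iff_successively:
  "dpath E p \<longleftrightarrow> p \<noteq> [] \<and> successively (\<lambda>x y. (x, y) \<in> E) p"
  by (simp add: dpath_def successively_conv_nth)

lemma dpath_Cons_Cons: "dpath E (x # y # ys) \<longleftrightarrow> (x, y) \<in> E \<and> dpath E (y # ys)"
  by (simp add: dpath_iff_successively)

lemma dpath_mono: "E \<subseteq> E' \<Longrightarrow> dpath E p \<Longrightarrow> dpath E' p"
  unfolding dpath_def by blast

lemma dpath_hd_neq_lastE:
  assumes "dpath E p" "hd p \<noteq> last p"
  obtains y ys where "p = hd p # y # ys"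
  using assms unfolding dpath_def by (cases p rule: remdups_adj.cases) auto

lemma FTCG_edge_time_mono: "is_FTCG V E \<Longrightarrow> (x, y) \<in> E \<Longrightarrow> snd x \<le> snd y"
  unfolding is_FTCG_def by (cases x; cases y) auto

lemma FTCG_dpath_sorted_times:
  assumes "is_FTCG V E" "dpath E p"
  shows "sorted (map snd p)"
proof -
  have "successively (\<lambda>x y. (x, y) \<in> E) p"
    using assms(2) by (simp add: dpath_iff_successively)
  then have "successively (\<lambda>x y. snd x \<le> snd y) p"
    by (rule successively_mono) (use FTCG_edge_time_mono[OF assms(1)] in blast)
  then show ?thesis
    by (simp add: successively_map successively_conv_sorted_wrt[symmetric] transp_on_le)
qed

lemma FTCG_dpath_hd_time_le:
  assumes "is_FTCG V E" "dpath E p" "w \<in> set p"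
  shows "snd (hd p) \<le> snd w"
  using FTCG_dpath_sorted_times[OF assms(1,2)] assms(2,3) unfolding dpath_def
  by (cases p) auto

lemma FTCG_dpath_hd_last_time_le:
  "is_FTCG V E \<Longrightarrow> dpath E p \<Longrightarrow> snd (hd p) \<le> snd (last p)"
  using FTCG_dpath_hd_time_le last_in_set unfolding dpath_def by blast

lemma candidatesD:
  "E \<in> candidates V Es \<Longrightarrow> is_FTCG V E \<and> reduce E = Es"
  unfolding candidates_def by simp

lemma reduceI:
  assumes "((X, s), (Z, s')) \<in> E" "s \<le> s'"
  shows "(X, Z) \<in> reduce E"
proof -
  have "s' - s \<ge> 0 \<and> ((X, s' - (s' - s)), (Z, s')) \<in> E" using assms by simp
  then show ?thesis unfolding reduce_def by blast
qed

lemma reduce_Un: "reduce (A \<union> B) = reduce A \<union> reduce B"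
  unfolding reduce_def by blast

lemma reduce_subset_full_vertices:
  "is_FTCG V E \<Longrightarrow> reduce E \<subseteq> V \<times> V"
  unfolding is_FTCG_def reduce_def full_vertices_def by blast

definition strict_forward_edges :: "('v \<times> 'v) set \<Rightarrow> ('v tvertex \<times> 'v tvertex) set" where
  "strict_forward_edges Es = {((X, s), (Z, s')) | X s Z s'. (X, Z) \<in> Es \<and> s < s'}"

lemma reduce_strict_forward_edges_subset: "reduce (strict_forward_edges Es) \<subseteq> Es"
  unfolding reduce_def strict_forward_edges_def by auto

lemma Un_strict_forward_edges_time:
  assumes "is_FTCG V E" "(x, y) \<in> E \<union> strict_forward_edges Es"
  shows "snd x \<le> snd y \<and> ((x, y) \<in> E \<or> snd x < snd y)"
  using assms FTCG_edge_time_mono[OF assms(1), of x y]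
  unfolding strict_forward_edges_def by auto

lemma trancl_Un_strict_forward_edges_time:
  assumes "is_FTCG V E" "(x, y) \<in> (E \<union> strict_forward_edges Es)\<^sup>+"
  shows "snd x \<le> snd y \<and> ((x, y) \<in> E\<^sup>+ \<or> snd x < snd y)"
  using assms(2)
proof (induction rule: trancl_induct)
  case (base y)
  then show ?case using Un_strict_forward_edges_time[OF assms(1)] by blast
next
  case (step y z)
  then show ?case
    using Un_strict_forward_edges_time[OF assms(1) step(2)] by (auto intro: trancl_into_trancl)
qed

lemma candidates_Un_strict_forward_edges:
  assumes "E \<in> candidates V Es"
  shows "E \<union> strict_forward_edges Es \<in> candidates V Es"
proof -
  have ft: "is_FTCG V E" and red: "reduce E = Es"
    using candidatesD[OF assms] by auto
  have "strict_forward_edges Es \<subseteq> full_vertices V \<times> full_vertices V"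
    using reduce_subset_full_vertices[OF ft] red
    unfolding strict_forward_edges_def full_vertices_def by auto
  moreover have "s \<le> s'" if "((X, s), (Z, s')) \<in> E \<union> strict_forward_edges Es" for X s Z s'
    using Un_strict_forward_edges_time[OF ft that] by simp
  moreover have "acyclic (E \<union> strict_forward_edges Es)"
    using trancl_Un_strict_forward_edges_time[OF ft] ft
    unfolding acyclic_def is_FTCG_def by blast
  moreover have "reduce (E \<union> strict_forward_edges Es) = Es"
    using red reduce_strict_forward_edges_subset by (auto simp: reduce_Un)
  ultimately show ?thesis
    using ft unfolding candidates_def is_FTCG_def by blast
qed

lemma NC_time_lower_bound:
  assumes "d \<in> NC V Es Xf Y t"
  obtains x where "x \<in> Xf" "snd x \<le> snd d"
proof -
  obtain E p W where E: "E \<in> candidates V Es" and p: "proper_dpath E Xf {(Y, t)} p"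
    and W: "W \<in> set p" "d \<in> descendants E W"
    using assms unfolding NC_def CF_def Forb_def by blast
  have ft: "is_FTCG V E" using candidatesD[OF E] by simp
  obtain q where q: "dpath E q" "hd q = W" "last q = d"
    using W(2) unfolding descendants_def by blast
  have "snd (hd p) \<le> snd W"
    using FTCG_dpath_hd_time_le[OF ft _ W(1)] p unfolding proper_dpath_def by blast
  also have "\<dots> \<le> snd d"
    using FTCG_dpath_hd_last_time_le[OF ft q(1)] q by simp
  finally show ?thesis
    using that p unfolding proper_dpath_def by blast
qed

lemma NC_times_bdd_below:
  assumes "finite Xf"
  obtains L where "\<forall>d \<in> NC V Es Xf Y t. L \<le> snd d"
proof
  show "\<forall>d \<in> NC V Es Xf Y t. Min (snd ` Xf) \<le> snd d"
  proof
    fix d assume "d \<in> NC V Es Xf Y t"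
    then obtain x where "x \<in> Xf" "snd x \<le> snd d" by (rule NC_time_lower_bound)
    then show "Min (snd ` Xf) \<le> snd d"
      using Min_le[OF finite_imageI[OF assms]] order_trans by blast
  qed
qed

lemma NC_least_time:
  assumes "finite Xf" "(F, a) \<in> NC V Es Xf Y t"
  obtains m where "(F, m) \<in> NC V Es Xf Y t" "\<forall>t1. (F, t1) \<in> NC V Es Xf Y t \<longrightarrow> m \<le> t1"
proof -
  obtain L where "\<forall>d \<in> NC V Es Xf Y t. L \<le> snd d"
    using NC_times_bdd_below[OF assms(1)] .
  then have bound: "\<forall>t1 \<in> {t1. (F, t1) \<in> NC V Es Xf Y t}. L \<le> t1" by force
  have "a \<in> {t1. (F, t1) \<in> NC V Es Xf Y t}" using assms(2) by simp
  then obtain m where "m \<in> {t1. (F, t1) \<in> NC V Es Xf Y t}"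
    "\<forall>t1 \<in> {t1. (F, t1) \<in> NC V Es Xf Y t}. m \<le> t1"
    using bound by (rule int_set_bdd_below_has_least)
  then show ?thesis using that by simp
qed

lemma NC_accessible_in_NC:
  assumes "NC_accessible V Es Xf Y t T Ft"
  shows "Ft \<in> NC V Es Xf Y t"
proof -
  obtain E p where p: "dpath E p" "hd p = Ft" "last p = T"
    "\<forall>v \<in> set (butlast p). v \<in> NC V Es Xf Y t" and "Ft \<noteq> T"
    using assms unfolding NC_accessible_def by blast
  then obtain y ys where "p = Ft # y # ys"
    using dpath_hd_neq_lastE[OF p(1)] p(2,3) by blast
  then show ?thesis using p(4) by simp
qed

lemma NC_accessible_time_le:
  assumes "NC_accessible V Es Xf Y t T Ft"
  shows "snd Ft \<le> snd T"
proof -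
  obtain E p where "E \<in> candidates V Es" "dpath E p" "hd p = Ft" "last p = T"
    using assms unfolding NC_accessible_def by blast
  then show ?thesis using FTCG_dpath_hd_last_time_le candidatesD by blast
qed

lemma NC_accessible_earlier:
  assumes acc: "NC_accessible V Es Xf Y t T (F, a)"
    and NC: "(F, m) \<in> NC V Es Xf Y t" and "m \<le> a"
  shows "NC_accessible V Es Xf Y t T (F, m)"
proof (cases "m = a")
  case True
  then show ?thesis using acc by simp
next
  case False
  with \<open>m \<le> a\<close> have "m < a" by simp
  obtain E p where E: "E \<in> candidates V Es" and p: "dpath E p" "hd p = (F, a)" "last p = T"
      "\<forall>v \<in> set (butlast p). v \<in> NC V Es Xf Y t"
    and FV: "(F, a) \<in> full_vertices V" and "(F, a) \<noteq> T"
    using acc unfolding NC_accessible_def by blast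
  have ft: "is_FTCG V E" and red: "reduce E = Es" using candidatesD[OF E] by auto
  have "hd p \<noteq> last p" using p(2,3) \<open>(F, a) \<noteq> T\<close> by simp
  then obtain y ys where "p = hd p # y # ys" by (rule dpath_hd_neq_lastE[OF p(1)])
  moreover obtain U s where "y = (U, s)" by fastforce
  ultimately have p_eq: "p = (F, a) # (U, s) # ys" using p(2) by simp
  have edge: "((F, a), (U, s)) \<in> E" and tail: "dpath E ((U, s) # ys)"
    using p(1) p_eq by (simp_all add: dpath_Cons_Cons)
  have "a \<le> s" using FTCG_edge_time_mono[OF ft edge] by simp
  then have "(F, U) \<in> Es" using reduceI[OF edge] red by simp
  then have "((F, m), (U, s)) \<in> strict_forward_edges Es"
    using \<open>m < a\<close> \<open>a \<le> s\<close> unfolding strict_forward_edges_def by auto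
  then have "dpath (E \<union> strict_forward_edges Es) ((F, m) # (U, s) # ys)"
    using dpath_mono[OF _ tail, of "E \<union> strict_forward_edges Es"] by (simp add: dpath_Cons_Cons)
  moreover have "\<forall>v \<in> set (butlast ((F, m) # (U, s) # ys)). v \<in> NC V Es Xf Y t"
    using p(4) p_eq NC by auto
  moreover have "(F, m) \<in> full_vertices V - {T}"
    using FV NC_accessible_time_le[OF acc] \<open>m < a\<close> unfolding full_vertices_def by auto
  ultimately show ?thesis
    using candidates_Un_strict_forward_edges[OF E] p(3) p_eq unfolding NC_accessible_def
    by (intro conjI bexI[of _ "E \<union> strict_forward_edges Es"] exI[of _ "(F, m) # (U, s) # ys"]) auto
qed

lemma t_NC_le_t_acc_iff:
  assumes "finite Xf"
  shows "t_NC V Es Xf Y t F \<le> t_acc V Es Xf Y t T F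
    \<longleftrightarrow> (\<exists>a. NC_accessible V Es Xf Y t T (F, a))"
proof
  assume le: "t_NC V Es Xf Y t F \<le> t_acc V Es Xf Y t T F"
  obtain L where "\<forall>d \<in> NC V Es Xf Y t. L \<le> snd d"
    using NC_times_bdd_below[OF assms] .
  then have "ereal (real_of_int L) \<le> t_NC V Es Xf Y t F"
    unfolding t_NC_def by (force intro: Inf_greatest)
  with le have "t_acc V Es Xf Y t T F \<noteq> -\<infinity>" by auto
  then show "\<exists>a. NC_accessible V Es Xf Y t T (F, a)"
    unfolding t_acc_def by (rule contrapos_np) (simp add: bot_ereal_def)
next
  assume "\<exists>a. NC_accessible V Es Xf Y t T (F, a)"
  then obtain a where acc: "NC_accessible V Es Xf Y t T (F, a)" ..
  have "t_NC V Es Xf Y t F \<le> ereal (real_of_int a)"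
    unfolding t_NC_def by (rule Inf_lower) (use NC_accessible_in_NC[OF acc] in blast)
  also have "\<dots> \<le> t_acc V Es Xf Y t T F"
    unfolding t_acc_def by (rule Sup_upper) (use acc in blast)
  finally show "t_NC V Es Xf Y t F \<le> t_acc V Es Xf Y t T F" .
qed

theorem corollary1:
  fixes V :: "'v set" and Es :: "('v \<times> 'v) set"
    and Y F :: 'v and t :: int and n :: nat
    and Xs :: "nat \<Rightarrow> 'v" and \<gamma> :: "nat \<Rightarrow> int" and i :: nat
  assumes "finite V"
    and "is_SCG V Es"
    and "Y \<in> V"
    and "\<forall>k \<in> {1..n}. Xs k \<in> V \<and> \<gamma> k \<ge> 0 \<and> (Xs k, Y) \<in> Es\<^sup>*"
    and "inj_on (\<lambda>k. (Xs k, t - \<gamma> k)) {1..n}"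
    and "F \<in> V"
    and "i \<in> {1..n}"
  defines "Xf \<equiv> (\<lambda>k. (Xs k, t - \<gamma> k)) ` {1..n}"
  shows "(\<exists>tf. NC_accessible V Es Xf Y t (Xs i, t - \<gamma> i) (F, tf)
              \<and> NC_accessible V Es Xf Y t (Y, t) (F, tf))
     \<longleftrightarrow> (t_NC V Es Xf Y t F \<le> t_acc V Es Xf Y t (Xs i, t - \<gamma> i) F
          \<and> t_NC V Es Xf Y t F \<le> t_acc V Es Xf Y t (Y, t) F)"
proof -
  let ?acc = "NC_accessible V Es Xf Y t"
  have fin: "finite Xf" unfolding Xf_def by simp
  have "(\<exists>tf. ?acc (Xs i, t - \<gamma> i) (F, tf) \<and> ?acc (Y, t) (F, tf))
    \<longleftrightarrow> (\<exists>a. ?acc (Xs i, t - \<gamma> i) (F, a)) \<and> (\<exists>b. ?acc (Y, t) (F, b))"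
  proof
    assume "(\<exists>a. ?acc (Xs i, t - \<gamma> i) (F, a)) \<and> (\<exists>b. ?acc (Y, t) (F, b))"
    then obtain a b where a: "?acc (Xs i, t - \<gamma> i) (F, a)" and b: "?acc (Y, t) (F, b)"
      by blast
    obtain m where m: "(F, m) \<in> NC V Es Xf Y t"
      and least: "\<forall>t1. (F, t1) \<in> NC V Es Xf Y t \<longrightarrow> m \<le> t1"
      using NC_least_time[OF fin NC_accessible_in_NC[OF a]] .
    have "?acc (Xs i, t - \<gamma> i) (F, m)"
      using NC_accessible_earlier[OF a m] least NC_accessible_in_NC[OF a] by simp
    moreover have "?acc (Y, t) (F, m)"
      using NC_accessible_earlier[OF b m] least NC_accessible_in_NC[OF b] by simp
    ultimately show "\<exists>tf. ?acc (Xs i, t - \<gamma> i) (F, tf) \<and> ?acc (Y, t) (F, tf)" by blast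
  qed blast
  then show ?thesis using t_NC_le_t_acc_iff[OF fin] by simp
qed

end
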